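(* Assume (A5). Let $0<d<d'<1$, $b_n=\exp(-n^d)$, $c_n=\exp(-n^{d'})$, and let $x_1,x_2,\dots$ be i.i.d. with density $f(\cdot;\theta_0)$ for some $\theta_0\in\Theta$. Then almost surely $$\lim_{n\to\infty}\ \sup_{\theta\in\Theta_{b_n}\cap\Theta_{c_n}^C}\frac1n\sum_{i=1}^n\log f(x_i;\theta)=-\infty.$$
   Context: The model is $f(x;\theta)=\sum_{m=1}^M\alpha_m f_m(x;\mu_m,\sigma_m)$ with $f_m(x;\mu_m,\sigma_m)=\frac1{\sigma_m}f_m(\frac{x-\mu_m}{\sigma_m};0,1)$ location-scale densities on $\mathbb{R}$; $\Theta$ is the set of all $\theta=(\alpha_1,\mu_1,\sigma_1,\dots,\alpha_M,\mu_M,\sigma_M)$ with $\alpha_m\ge0$, $\sum_m\alpha_m=1$, $\mu_m\in\mathbb{R}$, $\sigma_m>0$. (A5): constants $v_0,v_1>0$, $\beta>2$ with $f_m(x;0,1)\le\min\{v_0,v_1|x|^{-\beta}\}$ for all $x,m$. $\Theta_{b_n}=\{\theta\in\Theta:\min_{1\le m\ne m'\le M}\sigma_m/\sigma_{m'}\ge b_n\}$, $\Theta_{c_n}=\{\theta\in\Theta:\min_{1\le m\le M}\sigma_m\ge c_n\}$, $\Theta_{c_n}^C=\Theta\setminus\Theta_{c_n}$. *)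

theory Defs
  imports "HOL-Probability.Probability"
begin

text \<open>Components are indexed by m < M (i.e. 0..M-1). A parameter theta is a triple
 (alpha, mu, sigma) of functions on indices; only the values at m < M matter.\<close>

definition mixdens :: "nat \<Rightarrow> (nat \<Rightarrow> real \<Rightarrow> real) \<Rightarrow>
    (nat \<Rightarrow> real) \<times> (nat \<Rightarrow> real) \<times> (nat \<Rightarrow> real) \<Rightarrow> real \<Rightarrow> real" where
  "mixdens M g \<theta> x = (case \<theta> of (\<alpha>, \<mu>, \<sigma>) \<Rightarrow>
      (\<Sum>m<M. \<alpha> m * ((1 / \<sigma> m) * g m ((x - \<mu> m) / \<sigma> m))))"

definition Theta :: "nat \<Rightarrow> ((nat \<Rightarrow> real) \<times> (nat \<Rightarrow> real) \<times> (nat \<Rightarrow> real)) set" where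
  "Theta M = {(\<alpha>, \<mu>, \<sigma>). (\<forall>m<M. \<alpha> m \<ge> 0 \<and> \<sigma> m > 0) \<and> (\<Sum>m<M. \<alpha> m) = 1}"

definition Theta_b :: "nat \<Rightarrow> real \<Rightarrow> ((nat \<Rightarrow> real) \<times> (nat \<Rightarrow> real) \<times> (nat \<Rightarrow> real)) set" where
  "Theta_b M b = {(\<alpha>, \<mu>, \<sigma>) \<in> Theta M.
      \<forall>m<M. \<forall>m'<M. m \<noteq> m' \<longrightarrow> \<sigma> m / \<sigma> m' \<ge> b}"

definition Theta_c :: "nat \<Rightarrow> real \<Rightarrow> ((nat \<Rightarrow> real) \<times> (nat \<Rightarrow> real) \<times> (nat \<Rightarrow> real)) set" where
  "Theta_c M c = {(\<alpha>, \<mu>, \<sigma>) \<in> Theta M. \<forall>m<M. \<sigma> m \<ge> c}"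

text \<open>Average log-likelihood (1/n) sum_{i<n} log f(x_i; theta), valued in the extended
 reals with log 0 = -infinity.\<close>
definition avg_loglik :: "nat \<Rightarrow> (nat \<Rightarrow> real \<Rightarrow> real) \<Rightarrow>
    (nat \<Rightarrow> real) \<times> (nat \<Rightarrow> real) \<times> (nat \<Rightarrow> real) \<Rightarrow> (nat \<Rightarrow> real) \<Rightarrow> nat \<Rightarrow> ereal" where
  "avg_loglik M g \<theta> xs n =
     (if \<forall>i<n. mixdens M g \<theta> (xs i) > 0
      then ereal ((\<Sum>i<n. ln (mixdens M g \<theta> (xs i))) / real n)
      else -\<infinity>)"

end

theory Submission
  imports Defs "HOL-Real_Asymp.Real_Asymp"
begin

(* Almost surely the first n observations are eventually pairwise at distance at least 1/n^3:
   by independence and the bounded density, two observations fall within epsilon of each other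
   with probability O(epsilon), and Borel-Cantelli applies. Now let theta have some scale
   s = sigma_m0 < c_n and all scale ratios at least b_n, so every scale lies in [b_n s, s/b_n].
   By the tail bound of (A5), an observation at distance at least r = 1/(2 n^3) from all M
   centres has density O(s / (b_n r^2)); by the spacing at most M observations are closer to
   some centre, and their density is at most v0 / (b_n s). Summing logarithms, ln s < -n^d'
   enters with weight n - 2M and beats ln (1/b_n) = n^d and ln (1/r^2) = O(ln n). *)

lemma (in prob_space) indep_var_of_indep_vars:
  assumes "indep_vars (\<lambda>_. N) X I" "i \<in> I" "j \<in> I" "i \<noteq> j"
  shows "indep_var N (X i) N (X j)"
proof -
  have "indep_var (PiM {i} (\<lambda>_. N)) (\<lambda>\<omega>. restrict (\<lambda>k. X k \<omega>) {i})
                  (PiM {j} (\<lambda>_. N)) (\<lambda>\<omega>. restrict (\<lambda>k. X k \<omega>) {j})"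
    using assms by (intro indep_var_restrict) auto
  then have "indep_var N ((\<lambda>f. f i) \<circ> (\<lambda>\<omega>. restrict (\<lambda>k. X k \<omega>) {i}))
                       N ((\<lambda>f. f j) \<circ> (\<lambda>\<omega>. restrict (\<lambda>k. X k \<omega>) {j}))"
    by (rule indep_var_compose) auto
  then show ?thesis
    by (simp add: comp_def)
qed

lemma (in prob_space) prob_abs_diff_less_le:
  fixes X Y :: "'a \<Rightarrow> real" and f :: "real \<Rightarrow> real"
  assumes indep: "indep_var borel X borel Y"
    and Y: "distributed M lborel Y (\<lambda>y. ennreal (f y))"
    and f_le: "\<And>y. f y \<le> K" and K: "K \<ge> 0" and \<epsilon>: "\<epsilon> > 0"
  shows "prob {\<omega>\<in>space M. \<bar>X \<omega> - Y \<omega>\<bar> < \<epsilon>} \<le> 2 * K * \<epsilon>"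
proof -
  have rvX: "random_variable borel X" and rvY: "random_variable borel Y"
    and joint: "distr M borel X \<Otimes>\<^sub>M distr M borel Y = distr M (borel \<Otimes>\<^sub>M borel) (\<lambda>\<omega>. (X \<omega>, Y \<omega>))"
    using indep unfolding indep_var_distribution_eq by auto
  interpret X: prob_space "distr M borel X" by (rule prob_space_distr[OF rvX])
  interpret Y: prob_space "distr M borel Y" by (rule prob_space_distr[OF rvY])
  define D where "D = {p :: real \<times> real. \<bar>fst p - snd p\<bar> < \<epsilon>}"
  have D: "D \<in> sets (borel \<Otimes>\<^sub>M borel)"
  proof -
    have "Measurable.pred (borel \<Otimes>\<^sub>M borel) (\<lambda>p :: real \<times> real. \<bar>fst p - snd p\<bar> < \<epsilon>)"
      by measurable
    then show ?thesis
      unfolding D_def pred_def by (simp add: space_pair_measure)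
  qed
  have section_le: "emeasure (distr M borel Y) (Pair x -` D) \<le> ennreal (2 * K * \<epsilon>)" for x
  proof -
    have "Pair x -` D = {x - \<epsilon> <..< x + \<epsilon>}"
      unfolding D_def by auto
    then have "emeasure (distr M borel Y) (Pair x -` D) = emeasure (distr M lborel Y) {x - \<epsilon> <..< x + \<epsilon>}"
      using rvY by (simp add: emeasure_distr)
    also have "\<dots> = (\<integral>\<^sup>+y. ennreal (f y) * indicator {x - \<epsilon> <..< x + \<epsilon>} y \<partial>lborel)"
      unfolding distributed_distr_eq_density[OF Y]
      using distributed_borel_measurable[OF Y] by (subst emeasure_density) auto
    also have "\<dots> \<le> (\<integral>\<^sup>+y. ennreal K * indicator {x - \<epsilon> <..< x + \<epsilon>} y \<partial>lborel)"
      by (intro nn_integral_mono) (auto simp: indicator_def f_le ennreal_leI)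
    also have "\<dots> = ennreal (2 * K * \<epsilon>)"
      using K \<epsilon> by (simp add: nn_integral_cmult_indicator ennreal_mult' mult_ac)
    finally show ?thesis .
  qed
  have "emeasure M {\<omega>\<in>space M. \<bar>X \<omega> - Y \<omega>\<bar> < \<epsilon>} = emeasure (distr M (borel \<Otimes>\<^sub>M borel) (\<lambda>\<omega>. (X \<omega>, Y \<omega>))) D"
    using rvX rvY D by (subst emeasure_distr) (auto simp: D_def intro!: arg_cong[where f="emeasure M"])
  also have "\<dots> = (\<integral>\<^sup>+x. emeasure (distr M borel Y) (Pair x -` D) \<partial>distr M borel X)"
    unfolding joint[symmetric] using D by (simp add: Y.emeasure_pair_measure_alt)
  also have "\<dots> \<le> (\<integral>\<^sup>+x. ennreal (2 * K * \<epsilon>) \<partial>distr M borel X)"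
    by (intro nn_integral_mono section_le)
  also have "\<dots> = ennreal (2 * K * \<epsilon>)"
    using X.emeasure_space_1 by simp
  finally show ?thesis
    using K \<epsilon> by (simp add: emeasure_eq_measure)
qed

lemma (in prob_space) AE_neq_if_prob_abs_diff_less_le:
  fixes X Y :: "'a \<Rightarrow> real"
  assumes [measurable]: "X \<in> borel_measurable M" "Y \<in> borel_measurable M"
    and close: "\<And>\<epsilon>. \<epsilon> > 0 \<Longrightarrow> prob {\<omega>\<in>space M. \<bar>X \<omega> - Y \<omega>\<bar> < \<epsilon>} \<le> C * \<epsilon>"
  shows "AE \<omega> in M. X \<omega> \<noteq> Y \<omega>"
proof (rule AE_I')
  let ?N = "{\<omega>\<in>space M. X \<omega> = Y \<omega>}"
  have "prob ?N \<le> 0"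
  proof (rule field_le_epsilon)
    fix e :: real
    assume "e > 0"
    define \<epsilon> where "\<epsilon> = e / (\<bar>C\<bar> + 1)"
    have \<epsilon>: "\<epsilon> > 0" "\<bar>C\<bar> * \<epsilon> \<le> e"
      using \<open>e > 0\<close> by (auto simp: \<epsilon>_def field_simps)
    have "prob ?N \<le> prob {\<omega>\<in>space M. \<bar>X \<omega> - Y \<omega>\<bar> < \<epsilon>}"
      using \<epsilon> by (intro finite_measure_mono) auto
    also have "\<dots> \<le> C * \<epsilon>"
      using close \<epsilon> by blast
    also have "\<dots> \<le> \<bar>C\<bar> * \<epsilon>"
      using \<epsilon> by (intro mult_right_mono) auto
    finally show "prob ?N \<le> 0 + e"
      using \<epsilon> by simp
  qed
  then have "prob ?N = 0"
    using measure_nonneg[of M ?N] by linarith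
  then show "?N \<in> null_sets M"
    by (simp add: null_sets_def emeasure_eq_measure)
qed auto

definition separated :: "nat \<Rightarrow> (nat \<Rightarrow> real) \<Rightarrow> bool" where
  "separated n x \<longleftrightarrow> (\<forall>i<n. \<forall>j<n. i \<noteq> j \<longrightarrow> 1 / real n ^ 3 \<le> \<bar>x i - x j\<bar>)"

lemma eventually_separated:
  fixes x :: "nat \<Rightarrow> real"
  assumes "inj x"
    and late: "eventually (\<lambda>j. \<forall>i<j. 1 / real j ^ 3 \<le> \<bar>x i - x j\<bar>) sequentially"
  shows "eventually (\<lambda>n. separated n x) sequentially"
proof -
  obtain J where J: "\<And>j i. J \<le> j \<Longrightarrow> i < j \<Longrightarrow> 1 / real j ^ 3 \<le> \<bar>x i - x j\<bar>"
    using late by (auto simp: eventually_sequentially)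
  have lim: "(\<lambda>n. 1 / real n ^ 3) \<longlonglongrightarrow> 0"
    by real_asymp
  have early: "eventually (\<lambda>n. \<forall>j\<in>{..<J}. \<forall>i\<in>{..<j}. 1 / real n ^ 3 \<le> \<bar>x i - x j\<bar>) sequentially"
  proof (intro eventually_ball_finite ballI)
    fix j i :: nat
    assume "i \<in> {..<j}"
    then have "0 < \<bar>x i - x j\<bar>"
      using \<open>inj x\<close> by (auto simp: inj_eq)
    from order_tendstoD(2)[OF lim this]
    show "eventually (\<lambda>n. 1 / real n ^ 3 \<le> \<bar>x i - x j\<bar>) sequentially"
      by (rule eventually_mono) simp
  qed auto
  show ?thesis
    using early eventually_ge_at_top[of J]
  proof eventually_elim
    case (elim n)
    have ordered: "1 / real n ^ 3 \<le> \<bar>x i - x j\<bar>" if "i < j" "j < n" for i j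
    proof (cases "j < J")
      case True
      then show ?thesis
        using elim(1) that by auto
    next
      case False
      have "1 / real n ^ 3 \<le> 1 / real j ^ 3"
        using that by (intro divide_left_mono power_mono) auto
      also have "\<dots> \<le> \<bar>x i - x j\<bar>"
        using False J that by simp
      finally show ?thesis .
    qed
    show ?case
      unfolding separated_def using ordered by (metis abs_minus_commute linorder_neq_iff)
  qed
qed

lemma (in prob_space) AE_eventually_separated:
  fixes X :: "nat \<Rightarrow> 'a \<Rightarrow> real"
  assumes [measurable]: "\<And>i. X i \<in> borel_measurable M"
    and close: "\<And>i j \<epsilon>. i \<noteq> j \<Longrightarrow> \<epsilon> > 0 \<Longrightarrow> prob {\<omega>\<in>space M. \<bar>X i \<omega> - X j \<omega>\<bar> < \<epsilon>} \<le> C * \<epsilon>"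
  shows "AE \<omega> in M. eventually (\<lambda>n. separated n (\<lambda>i. X i \<omega>)) sequentially"
proof -
  have "AE \<omega> in M. \<forall>i j. i \<noteq> j \<longrightarrow> X i \<omega> \<noteq> X j \<omega>"
    unfolding AE_all_countable
    by (intro allI AE_impI AE_neq_if_prob_abs_diff_less_le assms(1)) (auto intro: close)
  then have inj: "AE \<omega> in M. inj (\<lambda>i. X i \<omega>)"
    by eventually_elim (auto simp: inj_def)
  define A where "A j = (\<Union>i<j. {\<omega>\<in>space M. \<bar>X i \<omega> - X j \<omega>\<bar> < 1 / real j ^ 3})" for j
  have [measurable]: "A j \<in> sets M" for j
    unfolding A_def by measurable
  have A_le: "prob (A j) \<le> C / real j ^ 2" for j
  proof (cases "j = 0")
    case False
    have "prob (A j) \<le> (\<Sum>i<j. prob {\<omega>\<in>space M. \<bar>X i \<omega> - X j \<omega>\<bar> < 1 / real j ^ 3})"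
      unfolding A_def by (intro measure_UNION_le) auto
    also have "\<dots> \<le> (\<Sum>i<j. C * (1 / real j ^ 3))"
      using False by (intro sum_mono close) auto
    also have "\<dots> = C / real j ^ 2"
      using False by (simp add: field_simps power3_eq_cube power2_eq_square)
    finally show ?thesis .
  qed (simp add: A_def)
  have "summable (\<lambda>j. C / real j ^ 2)"
    using inverse_power_summable[of 2, where 'a=real] by (simp add: divide_inverse summable_mult)
  then have "summable (\<lambda>j. prob (A j))"
    by (rule summable_comparison_test'[where N=0]) (use A_le in auto)
  then have "AE \<omega> in M. eventually (\<lambda>j. \<omega> \<in> space M - A j) sequentially"
    by (intro borel_cantelli_AE1) (auto simp: emeasure_eq_measure)
  then show ?thesis
    using inj
  proof eventually_elim
    case (elim \<omega>)
    from elim(1) have "eventually (\<lambda>j. \<forall>i<j. 1 / real j ^ 3 \<le> \<bar>X i \<omega> - X j \<omega>\<bar>) sequentially"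
      by eventually_elim (auto simp: A_def not_less)
    with elim(2) show ?case
      by (rule eventually_separated)
  qed
qed

lemma (in prob_space) AE_eventually_separated_bounded_density:
  fixes X :: "nat \<Rightarrow> 'a \<Rightarrow> real" and f :: "real \<Rightarrow> real"
  assumes indep: "indep_vars (\<lambda>_. borel) X UNIV"
    and distr: "\<And>i. distributed M lborel (X i) (\<lambda>x. ennreal (f x))"
    and f_le: "\<And>x. f x \<le> K" and "K \<ge> 0"
  shows "AE \<omega> in M. eventually (\<lambda>n. separated n (\<lambda>i. X i \<omega>)) sequentially"
proof (rule AE_eventually_separated)
  show "X i \<in> borel_measurable M" for i
    using distributed_measurable[OF distr[of i]] by simp
  fix i j :: nat and \<epsilon> :: real
  assume "i \<noteq> j" "\<epsilon> > 0"
  then show "prob {\<omega>\<in>space M. \<bar>X i \<omega> - X j \<omega>\<bar> < \<epsilon>} \<le> 2 * K * \<epsilon>"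
    using indep_var_of_indep_vars[OF indep] f_le \<open>K \<ge> 0\<close> distr
    by (intro prob_abs_diff_less_le[where f = f]) auto
qed

lemma mixdens_le:
  assumes "(\<alpha>, \<mu>, \<sigma>) \<in> Theta M"
    and "\<And>m. m < M \<Longrightarrow> (1 / \<sigma> m) * g m ((x - \<mu> m) / \<sigma> m) \<le> C"
  shows "mixdens M g (\<alpha>, \<mu>, \<sigma>) x \<le> C"
proof -
  have "\<forall>m<M. \<alpha> m \<ge> 0" and weights: "(\<Sum>m<M. \<alpha> m) = 1"
    using assms(1) by (auto simp: Theta_def)
  then have "mixdens M g (\<alpha>, \<mu>, \<sigma>) x \<le> (\<Sum>m<M. \<alpha> m * C)"
    unfolding mixdens_def using assms(2)
    by (auto intro!: sum_mono mult_left_mono simp del: times_divide_eq_right)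
  also have "\<dots> = C"
    using weights by (simp add: sum_distrib_right[symmetric])
  finally show ?thesis .
qed

lemma mixdens_bounded:
  assumes "\<theta> \<in> Theta M" and g_le: "\<And>m x. m < M \<Longrightarrow> g m x \<le> v0" and "v0 \<ge> 0"
  obtains K where "K \<ge> 0" "\<And>x. mixdens M g \<theta> x \<le> K"
proof -
  obtain \<alpha> \<mu> \<sigma> where \<theta>_eq: "\<theta> = (\<alpha>, \<mu>, \<sigma>)"
    by (cases \<theta>)
  have \<sigma>_pos: "\<sigma> m > 0" if "m < M" for m
    using assms that by (auto simp: \<theta>_eq Theta_def)
  define K where "K = (\<Sum>m<M. v0 / \<sigma> m)"
  have "v0 / \<sigma> m \<le> K" if "m < M" for m
    unfolding K_def using that \<sigma>_pos \<open>v0 \<ge> 0\<close> by (intro member_le_sum) (auto simp: less_imp_le)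
  moreover have "(1 / \<sigma> m) * g m ((x - \<mu> m) / \<sigma> m) \<le> v0 / \<sigma> m" if "m < M" for m x
    using g_le[OF that] \<sigma>_pos[OF that] by (simp add: divide_right_mono)
  ultimately have "mixdens M g \<theta> x \<le> K" for x
    unfolding \<theta>_eq using assms by (intro mixdens_le) (auto simp: \<theta>_eq intro: order.trans)
  moreover have "K \<ge> 0"
    unfolding K_def using \<sigma>_pos \<open>v0 \<ge> 0\<close> by (intro sum_nonneg divide_nonneg_pos) auto
  ultimately show ?thesis
    using that by blast
qed

lemma scaled_density_le_far:
  fixes g :: "real \<Rightarrow> real"
  assumes g_le: "\<And>x. g x \<le> v0" and g_tail: "\<And>x. x \<noteq> 0 \<Longrightarrow> g x \<le> v1 * \<bar>x\<bar> powr (-\<beta>)"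
    and "\<beta> \<ge> 2" "v0 \<ge> 0" "v1 \<ge> 0" "\<sigma> > 0" "r > 0" and far: "r \<le> \<bar>x - \<mu>\<bar>"
  shows "(1 / \<sigma>) * g ((x - \<mu>) / \<sigma>) \<le> (v0 + v1) * \<sigma> / r ^ 2"
proof (cases "1 \<le> \<bar>(x - \<mu>) / \<sigma>\<bar>")
  case True
  define z where "z = (x - \<mu>) / \<sigma>"
  have z: "1 \<le> \<bar>z\<bar>" "z \<noteq> 0"
    using True by (auto simp: z_def)
  have "g z \<le> v1 * \<bar>z\<bar> powr (-\<beta>)"
    using g_tail z by simp
  also have "\<dots> \<le> v1 * \<bar>z\<bar> powr (-2)"
    using z assms by (intro mult_left_mono powr_mono) auto
  also have "\<bar>z\<bar> powr (-2) = 1 / z ^ 2"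
    using z by (simp add: powr_minus powr_numeral divide_inverse)
  also have "\<dots> = \<sigma> ^ 2 / (x - \<mu>) ^ 2"
    using \<open>\<sigma> > 0\<close> by (simp add: z_def power_divide)
  also have "\<dots> \<le> \<sigma> ^ 2 / r ^ 2"
  proof -
    have "r ^ 2 \<le> (x - \<mu>) ^ 2"
      using far \<open>r > 0\<close> by (metis abs_ge_zero abs_of_pos power2_abs power_mono)
    then show ?thesis
      using far \<open>r > 0\<close> by (intro divide_left_mono mult_pos_pos) auto
  qed
  finally have "(1 / \<sigma>) * g z \<le> (1 / \<sigma>) * (v1 * (\<sigma> ^ 2 / r ^ 2))"
    using assms by (intro mult_left_mono) (auto simp: mult_left_mono)
  also have "\<dots> \<le> (v0 + v1) * \<sigma> / r ^ 2"
    using assms by (simp add: power2_eq_square divide_right_mono mult_right_mono)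
  finally show ?thesis
    by (simp add: z_def)
next
  case False
  then have "r < \<sigma>"
    using far \<open>\<sigma> > 0\<close> by (simp add: abs_divide)
  have "(1 / \<sigma>) * g ((x - \<mu>) / \<sigma>) \<le> v0 / \<sigma>"
    using g_le \<open>\<sigma> > 0\<close> by (simp add: divide_right_mono)
  also have "\<dots> \<le> v0 * \<sigma> / r ^ 2"
  proof -
    have "r ^ 2 \<le> \<sigma> ^ 2"
      using \<open>r < \<sigma>\<close> \<open>r > 0\<close> by (intro power_mono) auto
    then have "1 / \<sigma> \<le> \<sigma> / r ^ 2"
      using assms by (simp add: field_simps power2_eq_square)
    then have "v0 * (1 / \<sigma>) \<le> v0 * (\<sigma> / r ^ 2)"
      using \<open>v0 \<ge> 0\<close> by (rule mult_left_mono)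
    then show ?thesis
      by simp
  qed
  also have "\<dots> \<le> (v0 + v1) * \<sigma> / r ^ 2"
    using assms by (intro divide_right_mono mult_right_mono) auto
  finally show ?thesis .
qed

lemma Theta_b_scale_bounds:
  assumes "(\<alpha>, \<mu>, \<sigma>) \<in> Theta_b M b" "0 < b" "b \<le> 1" "m0 < M" "m < M"
  shows "b * \<sigma> m0 \<le> \<sigma> m" "\<sigma> m \<le> \<sigma> m0 / b"
proof -
  have pos: "\<sigma> m > 0" "\<sigma> m0 > 0"
    using assms by (auto simp: Theta_b_def Theta_def)
  have "b \<le> \<sigma> m / \<sigma> m0 \<and> b \<le> \<sigma> m0 / \<sigma> m"
  proof (cases "m = m0")
    case True
    then show ?thesis
      using pos \<open>b \<le> 1\<close> by simp
  next
    case False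
    then show ?thesis
      using assms by (auto simp: Theta_b_def)
  qed
  then show "b * \<sigma> m0 \<le> \<sigma> m" "\<sigma> m \<le> \<sigma> m0 / b"
    using pos \<open>0 < b\<close> by (simp_all add: field_simps)
qed

lemma mixdens_le_Theta_b:
  assumes \<theta>: "(\<alpha>, \<mu>, \<sigma>) \<in> Theta_b M b" "0 < b" "b \<le> 1" "m0 < M"
    and g_le: "\<And>m x. m < M \<Longrightarrow> g m x \<le> v0" and "v0 \<ge> 0"
  shows "mixdens M g (\<alpha>, \<mu>, \<sigma>) x \<le> v0 / (b * \<sigma> m0)"
proof (rule mixdens_le)
  show "(\<alpha>, \<mu>, \<sigma>) \<in> Theta M"
    using \<theta> by (simp add: Theta_b_def)
  fix m
  assume "m < M"
  have "0 < b * \<sigma> m0" "b * \<sigma> m0 \<le> \<sigma> m"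
    using \<theta> \<open>m < M\<close> Theta_b_scale_bounds[OF \<theta>] by (auto simp: Theta_b_def Theta_def)
  then have "(1 / \<sigma> m) * g m ((x - \<mu> m) / \<sigma> m) \<le> v0 / \<sigma> m"
    using g_le \<open>m < M\<close> by (simp add: divide_right_mono)
  also have "\<dots> \<le> v0 / (b * \<sigma> m0)"
    using \<open>0 < b * \<sigma> m0\<close> \<open>b * \<sigma> m0 \<le> \<sigma> m\<close> \<open>v0 \<ge> 0\<close> by (intro divide_left_mono) auto
  finally show "(1 / \<sigma> m) * g m ((x - \<mu> m) / \<sigma> m) \<le> v0 / (b * \<sigma> m0)" .
qed

lemma mixdens_le_far_Theta_b:
  assumes \<theta>: "(\<alpha>, \<mu>, \<sigma>) \<in> Theta_b M b" "0 < b" "b \<le> 1" "m0 < M"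
    and g_le: "\<And>m x. m < M \<Longrightarrow> g m x \<le> v0"
    and g_tail: "\<And>m x. m < M \<Longrightarrow> x \<noteq> 0 \<Longrightarrow> g m x \<le> v1 * \<bar>x\<bar> powr (-\<beta>)"
    and "\<beta> \<ge> 2" "v0 \<ge> 0" "v1 \<ge> 0" "r > 0"
    and far: "\<And>m. m < M \<Longrightarrow> r \<le> \<bar>x - \<mu> m\<bar>"
  shows "mixdens M g (\<alpha>, \<mu>, \<sigma>) x \<le> (v0 + v1) * \<sigma> m0 / (b * r ^ 2)"
proof (rule mixdens_le)
  show "(\<alpha>, \<mu>, \<sigma>) \<in> Theta M"
    using \<theta> by (simp add: Theta_b_def)
  fix m
  assume "m < M"
  then have "\<sigma> m > 0"
    using \<theta> by (auto simp: Theta_b_def Theta_def)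
  have "(1 / \<sigma> m) * g m ((x - \<mu> m) / \<sigma> m) \<le> (v0 + v1) * \<sigma> m / r ^ 2"
    using \<open>m < M\<close> \<open>\<sigma> m > 0\<close> assms by (intro scaled_density_le_far) auto
  also have "\<dots> \<le> (v0 + v1) * (\<sigma> m0 / b) / r ^ 2"
    using Theta_b_scale_bounds(2)[OF \<theta> \<open>m < M\<close>] assms
    by (intro divide_right_mono mult_left_mono) auto
  finally show "(1 / \<sigma> m) * g m ((x - \<mu> m) / \<sigma> m) \<le> (v0 + v1) * \<sigma> m0 / (b * r ^ 2)"
    by (simp add: field_simps)
qed

lemma card_le_if_separated_near_centres:
  fixes x :: "'i \<Rightarrow> real" and \<mu> :: "nat \<Rightarrow> real"
  assumes sep: "\<And>i j. i \<in> C \<Longrightarrow> j \<in> C \<Longrightarrow> i \<noteq> j \<Longrightarrow> 2 * r \<le> \<bar>x i - x j\<bar>"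
    and near: "\<And>i. i \<in> C \<Longrightarrow> \<exists>m<M. \<bar>x i - \<mu> m\<bar> < r"
  shows "card C \<le> M"
proof -
  obtain h where h: "\<And>i. i \<in> C \<Longrightarrow> h i < M \<and> \<bar>x i - \<mu> (h i)\<bar> < r"
    using near by metis
  have "inj_on h C"
  proof (rule inj_onI, rule ccontr)
    fix i j
    assume "i \<in> C" "j \<in> C" "h i = h j" "i \<noteq> j"
    then have "\<bar>x i - x j\<bar> < 2 * r"
      using h[of i] h[of j] by auto
    then show False
      using sep \<open>i \<in> C\<close> \<open>j \<in> C\<close> \<open>i \<noteq> j\<close> by (simp add: not_le[symmetric])
  qed
  moreover have "h ` C \<subseteq> {..<M}"
    using h by auto
  ultimately show ?thesis
    using card_inj_on_le[of h C "{..<M}"] by simp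
qed

lemma sum_le_with_exceptions:
  fixes a :: "'i \<Rightarrow> real"
  assumes "finite I" "C \<subseteq> I" "card C \<le> k" "k \<le> card I"
    and le_p: "\<And>i. i \<in> I \<Longrightarrow> a i \<le> p" and le_q: "\<And>i. i \<in> I - C \<Longrightarrow> a i \<le> q"
  shows "sum a I \<le> real k * p + (real (card I) - real k) * q"
proof -
  define q' where "q' = min p q"
  have card_diff: "real (card (I - C)) = real (card I) - real (card C)"
    using assms by (simp add: card_Diff_subset card_mono finite_subset of_nat_diff)
  have "sum a I = sum a C + sum a (I - C)"
    using assms by (simp add: sum.subset_diff)
  also have "\<dots> \<le> real (card C) * p + real (card (I - C)) * q'"
    using assms by (intro add_mono sum_bounded_above) (auto simp: q'_def)
  also have "\<dots> = real (card I) * q' + real (card C) * (p - q')"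
    by (simp add: card_diff algebra_simps)
  also have "\<dots> \<le> real (card I) * q' + real k * (p - q')"
    using assms by (intro add_left_mono mult_right_mono) (auto simp: q'_def)
  also have "\<dots> = real k * p + (real (card I) - real k) * q'"
    by (simp add: algebra_simps)
  also have "\<dots> \<le> real k * p + (real (card I) - real k) * q"
    using assms by (intro add_left_mono mult_left_mono) (auto simp: q'_def)
  finally show ?thesis .
qed

lemma sum_ln_mixdens_le_if_separated:
  fixes xs :: "nat \<Rightarrow> real" and B :: real
  assumes \<theta>: "(\<alpha>, \<mu>, \<sigma>) \<in> Theta_b M (exp (-B))" "0 \<le> B" "m0 < M"
    and g_le: "\<And>m x. m < M \<Longrightarrow> g m x \<le> v0"
    and g_tail: "\<And>m x. m < M \<Longrightarrow> x \<noteq> 0 \<Longrightarrow> g m x \<le> v1 * \<bar>x\<bar> powr (-\<beta>)"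
    and "\<beta> \<ge> 2" "v0 > 0" "v1 > 0" and n: "M \<le> n" "1 \<le> n"
    and sep: "separated n xs"
    and pos: "\<And>i. i < n \<Longrightarrow> mixdens M g (\<alpha>, \<mu>, \<sigma>) (xs i) > 0"
  shows "(\<Sum>i<n. ln (mixdens M g (\<alpha>, \<mu>, \<sigma>) (xs i)))
    \<le> real M * (ln v0 + B - ln (\<sigma> m0))
       + (real n - real M) * (ln (v0 + v1) + B + 2 * ln (2 * real n ^ 3) + ln (\<sigma> m0))"
proof -
  define b where "b = exp (-B)"
  have b: "0 < b" "b \<le> 1"
    using \<open>0 \<le> B\<close> by (auto simp: b_def)
  note \<theta>b = \<theta>(1)[folded b_def] b \<open>m0 < M\<close>
  have "\<sigma> m0 > 0"
    using \<theta> by (auto simp: Theta_b_def Theta_def)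
  define r where "r = 1 / (2 * real n ^ 3)"
  have "r > 0"
    using n by (simp add: r_def)
  define C where "C = {i\<in>{..<n}. \<exists>m<M. \<bar>xs i - \<mu> m\<bar> < r}"
  have "card C \<le> M"
    by (rule card_le_if_separated_near_centres[of C r xs])
      (use sep in \<open>auto simp: C_def r_def separated_def\<close>)
  have "(\<Sum>i<n. ln (mixdens M g (\<alpha>, \<mu>, \<sigma>) (xs i)))
      \<le> real M * ln (v0 / (b * \<sigma> m0)) + (real (card {..<n}) - real M) * ln ((v0 + v1) * \<sigma> m0 / (b * r ^ 2))"
  proof (rule sum_le_with_exceptions)
    show "C \<subseteq> {..<n}"
      by (auto simp: C_def)
    fix i
    assume "i \<in> {..<n}"
    then show "ln (mixdens M g (\<alpha>, \<mu>, \<sigma>) (xs i)) \<le> ln (v0 / (b * \<sigma> m0))"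
      using pos mixdens_le_Theta_b[OF \<theta>b g_le] assms b \<open>\<sigma> m0 > 0\<close> by (subst ln_le_cancel_iff) auto
  next
    fix i
    assume "i \<in> {..<n} - C"
    then have "\<And>m. m < M \<Longrightarrow> \<not> \<bar>xs i - \<mu> m\<bar> < r"
      by (auto simp: C_def)
    then have "mixdens M g (\<alpha>, \<mu>, \<sigma>) (xs i) \<le> (v0 + v1) * \<sigma> m0 / (b * r ^ 2)"
      using assms \<open>r > 0\<close> by (intro mixdens_le_far_Theta_b[OF \<theta>b g_le g_tail]) (auto simp: not_less)
    then show "ln (mixdens M g (\<alpha>, \<mu>, \<sigma>) (xs i)) \<le> ln ((v0 + v1) * \<sigma> m0 / (b * r ^ 2))"
      using \<open>i \<in> {..<n} - C\<close> pos assms b \<open>\<sigma> m0 > 0\<close> \<open>r > 0\<close> by (subst ln_le_cancel_iff) auto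
  qed (use \<open>card C \<le> M\<close> n in auto)
  moreover have "ln (v0 / (b * \<sigma> m0)) = ln v0 + B - ln (\<sigma> m0)"
    using assms \<open>\<sigma> m0 > 0\<close> by (simp add: b_def ln_div ln_mult)
  moreover have "ln ((v0 + v1) * \<sigma> m0 / (b * r ^ 2)) = ln (v0 + v1) + B + 2 * ln (2 * real n ^ 3) + ln (\<sigma> m0)"
  proof -
    have "ln (r ^ 2) = - 2 * ln (2 * real n ^ 3)"
      using n \<open>r > 0\<close> by (simp add: ln_realpow) (simp add: r_def ln_div)
    then show ?thesis
      using assms \<open>\<sigma> m0 > 0\<close> \<open>r > 0\<close> by (simp add: b_def ln_div ln_mult)
  qed
  ultimately show ?thesis
    by simp
qed

lemma avg_loglik_le_if_separated:
  fixes xs :: "nat \<Rightarrow> real" and B T :: real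
  assumes g_le: "\<And>m x. m < M \<Longrightarrow> g m x \<le> v0"
    and g_tail: "\<And>m x. m < M \<Longrightarrow> x \<noteq> 0 \<Longrightarrow> g m x \<le> v1 * \<bar>x\<bar> powr (-\<beta>)"
    and "\<beta> \<ge> 2" "v0 > 0" "v1 > 0" and n: "2 * M \<le> n" "1 \<le> n" and "0 \<le> B" "T \<le> real n"
    and sep: "separated n xs"
    and \<theta>: "\<theta> \<in> Theta_b M (exp (-B)) \<inter> (Theta M - Theta_c M (exp (-T)))"
  shows "avg_loglik M g \<theta> xs n
    \<le> ereal (ln (v0 + v1) + 2 * ln (2 * real n ^ 3) + real M * (\<bar>ln v0\<bar> + \<bar>ln (v0 + v1)\<bar> + 2) + B - T)"
    (is "_ \<le> ereal ?bound")
proof (cases "\<forall>i<n. mixdens M g \<theta> (xs i) > 0")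
  case False
  then show ?thesis
    unfolding avg_loglik_def if_not_P[OF False] by simp
next
  case True
  obtain \<alpha> \<mu> \<sigma> where \<theta>_eq: "\<theta> = (\<alpha>, \<mu>, \<sigma>)"
    by (cases \<theta>)
  obtain m0 where "m0 < M" and small: "\<sigma> m0 < exp (-T)"
    using \<theta> by (auto simp: \<theta>_eq Theta_b_def Theta_c_def not_le)
  have "\<sigma> m0 > 0"
    using \<theta> \<open>m0 < M\<close> by (auto simp: \<theta>_eq Theta_def)
  with small have "ln (\<sigma> m0) \<le> -T"
    by (metis less_imp_le ln_exp ln_less_cancel_iff exp_gt_zero)
  have "1 \<le> real n ^ 3"
    using n by (simp add: one_le_power)
  then have "0 \<le> ln (2 * real n ^ 3)"
    by simp
  have accounting: "real M * (a + B - s) + (real n - real M) * (a' + B + E + s)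
      \<le> real n * (a' + E + real M * (\<bar>a\<bar> + \<bar>a'\<bar> + 2) + B - T)"
    if "s \<le> -T" "0 \<le> E" for a a' E s :: real
  proof -
    have "0 \<le> real n - 2 * real M"
      using n by simp
    then have "(real n - 2 * real M) * T \<le> (real n - 2 * real M) * (- s)"
      using that by (intro mult_left_mono) auto
    moreover have "real M * T \<le> real M * real n"
      using \<open>T \<le> real n\<close> by (intro mult_left_mono) auto
    moreover have "real M * \<bar>a\<bar> \<le> real n * (real M * \<bar>a\<bar>)" "real M * \<bar>a'\<bar> \<le> real n * (real M * \<bar>a'\<bar>)"
      using n mult_right_mono[of 1 "real n" "real M * \<bar>a\<bar>"] mult_right_mono[of 1 "real n" "real M * \<bar>a'\<bar>"]
      by simp_all
    moreover have "real M * a \<le> real M * \<bar>a\<bar>" "- (real M * a') \<le> real M * \<bar>a'\<bar>"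
      using mult_left_mono[of a "\<bar>a\<bar>" "real M"] mult_left_mono[of "- a'" "\<bar>a'\<bar>" "real M"] by simp_all
    moreover have "0 \<le> real M * E"
      using that by simp
    ultimately show ?thesis
      by (simp add: algebra_simps)
  qed
  have "(\<Sum>i<n. ln (mixdens M g \<theta> (xs i)))
      \<le> real M * (ln v0 + B - ln (\<sigma> m0)) + (real n - real M) * (ln (v0 + v1) + B + 2 * ln (2 * real n ^ 3) + ln (\<sigma> m0))"
    unfolding \<theta>_eq using \<theta> \<open>m0 < M\<close> assms True
    by (intro sum_ln_mixdens_le_if_separated[OF _ _ _ g_le g_tail]) (auto simp: \<theta>_eq)
  also have "\<dots> \<le> real n * ?bound"
    using \<open>ln (\<sigma> m0) \<le> -T\<close> \<open>0 \<le> ln (2 * real n ^ 3)\<close> by (intro accounting) auto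
  finally have "(\<Sum>i<n. ln (mixdens M g \<theta> (xs i))) / real n \<le> ?bound"
    using n by (simp add: divide_le_eq mult.commute)
  then show ?thesis
    using True by (simp add: avg_loglik_def)
qed

lemma SUP_avg_loglik_tendsto_MInfty_if_separated:
  fixes xs :: "nat \<Rightarrow> real" and d d' :: real
  assumes g_le: "\<And>m x. m < M \<Longrightarrow> g m x \<le> v0"
    and g_tail: "\<And>m x. m < M \<Longrightarrow> x \<noteq> 0 \<Longrightarrow> g m x \<le> v1 * \<bar>x\<bar> powr (-\<beta>)"
    and "\<beta> \<ge> 2" "v0 > 0" "v1 > 0" and d: "0 < d" "d < d'" "d' \<le> 1"
    and sep: "eventually (\<lambda>n. separated n xs) sequentially"
  shows "((\<lambda>n. SUP \<theta> \<in> Theta_b M (exp (- (real n powr d))) \<inter> (Theta M - Theta_c M (exp (- (real n powr d')))).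
            avg_loglik M g \<theta> xs n) \<longlongrightarrow> -\<infinity>) sequentially"
proof -
  define bound where "bound n = ln (v0 + v1) + 2 * ln (2 * real n ^ 3)
    + real M * (\<bar>ln v0\<bar> + \<bar>ln (v0 + v1)\<bar> + 2) + real n powr d - real n powr d'" for n
  have "filterlim (\<lambda>n. bound n) at_bot sequentially"
    unfolding bound_def using d by real_asymp
  then have below: "eventually (\<lambda>n. bound n < R) sequentially" for R
    by (simp add: filterlim_at_bot_dense)
  have sup_le: "eventually (\<lambda>n. (SUP \<theta> \<in> Theta_b M (exp (- (real n powr d))) \<inter> (Theta M - Theta_c M (exp (- (real n powr d')))).
      avg_loglik M g \<theta> xs n) \<le> ereal (bound n)) sequentially"
    using sep eventually_ge_at_top[of "2 * M"] eventually_ge_at_top[of 1]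
  proof eventually_elim
    case (elim n)
    have "real n powr d' \<le> real n"
      using powr_mono[of d' 1 "real n"] elim d by simp
    then show ?case
      unfolding bound_def
      by (intro SUP_least avg_loglik_le_if_separated[OF g_le g_tail]) (use elim assms in auto)
  qed
  show ?thesis
    unfolding tendsto_MInfty
    by (intro allI) (rule eventually_elim2[OF sup_le below], erule order.strict_trans1, simp)
qed

theorem mainTheorem6:
  fixes M :: nat and g :: "nat \<Rightarrow> real \<Rightarrow> real"
    and v0 v1 \<beta> d d' :: real
    and P :: "'w measure" and X :: "nat \<Rightarrow> 'w \<Rightarrow> real"
    and \<theta>0 :: "(nat \<Rightarrow> real) \<times> (nat \<Rightarrow> real) \<times> (nat \<Rightarrow> real)"
  assumes M_pos: "M \<ge> 1"
    and g_meas: "\<And>m. m < M \<Longrightarrow> g m \<in> borel_measurable lborel"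
    and g_nonneg: "\<And>m x. m < M \<Longrightarrow> g m x \<ge> 0"
    and g_dens: "\<And>m. m < M \<Longrightarrow> (g m has_integral 1) UNIV"
    and A5: "v0 > 0" "v1 > 0" "\<beta> > 2"
      "\<And>m x. m < M \<Longrightarrow> g m x \<le> v0"
      "\<And>m x. m < M \<Longrightarrow> x \<noteq> 0 \<Longrightarrow> g m x \<le> v1 * \<bar>x\<bar> powr (-\<beta>)"
    and d: "0 < d" "d < d'" "d' < 1"
    and P: "prob_space P"
    and indep: "prob_space.indep_vars P (\<lambda>_. borel) X UNIV"
    and \<theta>0: "\<theta>0 \<in> Theta M"
    and distr: "\<And>i. distributed P lborel (X i) (\<lambda>x. ennreal (mixdens M g \<theta>0 x))"
  shows "AE \<omega> in P.
    ((\<lambda>n. SUP \<theta> \<in> Theta_b M (exp (- (real n powr d))) \<inter>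
                   (Theta M - Theta_c M (exp (- (real n powr d')))).
             avg_loglik M g \<theta> (\<lambda>i. X i \<omega>) n)
      \<longlongrightarrow> (-\<infinity> :: ereal)) sequentially"
proof -
  interpret prob_space P
    by (rule P)
  obtain K where "K \<ge> 0" and dens_le: "\<And>x. mixdens M g \<theta>0 x \<le> K"
    by (rule mixdens_bounded[OF \<theta>0, of g v0]) (use A5 in auto)
  have "AE \<omega> in P. eventually (\<lambda>n. separated n (\<lambda>i. X i \<omega>)) sequentially"
    using indep distr dens_le \<open>K \<ge> 0\<close> by (rule AE_eventually_separated_bounded_density)
  then show ?thesis
  proof eventually_elim
    case (elim \<omega>)
    show ?case
      using A5 d elim by (intro SUP_avg_loglik_tendsto_MInfty_if_separated[OF A5(4,5)]) auto
  qed
qed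

end
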